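(* Let $X$ be a compact metric space and $(f_n)_{n\ge1}$ a sequence of continuous maps $X\to X$. Then for every integer $k\ge2$, the space $E(X,f_{1,\infty})^*$ is a continuous image of the space $E(X,f_{k,\infty})^*$ (both as subspaces of $X^X$ with the pointwise topology).
   Context: $\mathbb{N}=\{1,2,3,\dots\}$, $\mathbb{N}^*$ is the set of free ultrafilters on $\mathbb{N}$; for $p\in\mathbb{N}^*$, $p\text{-}\lim_n x_n$ is the unique $y$ with $\{n:x_n\in V\}\in p$ for every neighbourhood $V$ of $y$. Put $f_1^n=f_n\circ\cdots\circ f_1$ and $f_1^p(x)=p\text{-}\lim_n f_1^n(x)$ for $p\in\mathbb{N}^*$; $E(X,f_{1,\infty})^*=\{f_1^p:p\in\mathbb{N}^*\}$. For $k\ge2$, let $f_k^i=f_{k+i}\circ\cdots\circ f_k$ ($i\in\mathbb{N}$), $f_k^p(x)=p\text{-}\lim_i f_k^i(x)$ for $p\in\mathbb{N}^*$, and $E(X,f_{k,\infty})^*=\{f_k^p:p\in\mathbb{N}^*\}$. *)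

theory Defs
  imports "HOL-Analysis.Analysis"
begin

definition free_ultrafilter :: "nat filter \<Rightarrow> bool" where
  "free_ultrafilter p \<longleftrightarrow> p \<noteq> bot \<and>
     (\<forall>P. eventually P p \<or> eventually (\<lambda>n. \<not> P n) p) \<and>
     (\<forall>m. eventually (\<lambda>n. n \<noteq> m) p)"

fun comp_block :: "(nat \<Rightarrow> 'a \<Rightarrow> 'a) \<Rightarrow> nat \<Rightarrow> nat \<Rightarrow> 'a \<Rightarrow> 'a" where
  "comp_block f k 0 = id"
| "comp_block f k (Suc m) = f (k + m) \<circ> comp_block f k m"

definition iter1 :: "(nat \<Rightarrow> 'a \<Rightarrow> 'a) \<Rightarrow> nat \<Rightarrow> 'a \<Rightarrow> 'a" where
  "iter1 f n = comp_block f 1 n"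

text \<open>f_k^i = f_{k+i} o ... o f_k (i >= 1), i.e. i+1 maps.\<close>
definition iterk :: "(nat \<Rightarrow> 'a \<Rightarrow> 'a) \<Rightarrow> nat \<Rightarrow> nat \<Rightarrow> 'a \<Rightarrow> 'a" where
  "iterk f k i = comp_block f k (Suc i)"

definition E1_star :: "'a::metric_space set \<Rightarrow> (nat \<Rightarrow> 'a \<Rightarrow> 'a) \<Rightarrow> ('a \<Rightarrow> 'a) set" where
  "E1_star X f = {restrict (\<lambda>x. Lim p (\<lambda>n. iter1 f n x)) X | p. free_ultrafilter p}"

definition Ek_star :: "'a::metric_space set \<Rightarrow> (nat \<Rightarrow> 'a \<Rightarrow> 'a) \<Rightarrow> nat \<Rightarrow> ('a \<Rightarrow> 'a) set" where
  "Ek_star X f k = {restrict (\<lambda>x. Lim p (\<lambda>i. iterk f k i x)) X | p. free_ultrafilter p}"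

definition pointwise_top :: "'a::metric_space set \<Rightarrow> ('a \<Rightarrow> 'a) topology" where
  "pointwise_top X = product_topology (\<lambda>_. top_of_set X) X"

end

theory Submission
  imports Defs
begin

text \<open>Since f_1^{k+i} = f_k^i o f_1^{k-1}, shifting a free ultrafilter p by k gives
  f_1^{k+p} = f_k^p o f_1^{k-1}, and every free ultrafilter on the naturals is such a shift
  because it contains all cofinite sets. Hence precomposition with f_1^{k-1}, which is continuous
  for the pointwise topology, maps E(X,f_{k,\<infinity>})^* onto E(X,f_{1,\<infinity>})^*. The identity
  holds limit by limit (even where Lim is a junk value), so neither compactness nor continuity
  of the f_n is used.\<close>

lemma comp_block_add: "comp_block f a (m + n) = comp_block f (a + m) n \<circ> comp_block f a m"
  by (induction n) (auto simp: add.assoc)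

lemma comp_block_in:
  assumes "\<And>n. n \<ge> 1 \<Longrightarrow> f n ` X \<subseteq> X" "a \<ge> 1" "x \<in> X"
  shows "comp_block f a m x \<in> X"
  using assms by (induction m) (auto simp: image_subset_iff)

lemma iter1_add_eq_iterk:
  assumes "k \<ge> 1"
  shows "iter1 f (k + i) = iterk f k i \<circ> iter1 f (k - 1)"
proof -
  have "k + i = (k - 1) + Suc i" using assms by simp
  then show ?thesis
    using assms comp_block_add[of f 1 "k - 1" "Suc i"] unfolding iter1_def iterk_def by simp
qed

lemma free_ultrafilter_eventually_ge:
  assumes "free_ultrafilter p"
  shows "eventually (\<lambda>n. k \<le> n) p"
proof -
  have "eventually (\<lambda>n. \<forall>m\<in>{..<k}. n \<noteq> m) p"
    using assms by (subst eventually_ball_finite_distrib) (auto simp: free_ultrafilter_def)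
  then show ?thesis by (rule eventually_mono) force
qed

lemma free_ultrafilter_filtermap_add:
  assumes "free_ultrafilter p"
  shows "free_ultrafilter (filtermap (\<lambda>i. k + i) p)"
  unfolding free_ultrafilter_def
proof (intro conjI allI)
  show "filtermap (\<lambda>i. k + i) p \<noteq> bot"
    using assms by (simp add: free_ultrafilter_def filtermap_bot_iff)
  show "eventually P (filtermap ((+) k) p) \<or> eventually (\<lambda>n. \<not> P n) (filtermap ((+) k) p)" for P
    using assms by (simp add: free_ultrafilter_def eventually_filtermap)
  show "eventually (\<lambda>n. n \<noteq> m) (filtermap ((+) k) p)" for m
  proof -
    have "eventually (\<lambda>n. n \<noteq> m - k) p" using assms by (simp add: free_ultrafilter_def)
    then show ?thesis
      unfolding eventually_filtermap by (rule eventually_mono) auto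
  qed
qed

lemma free_ultrafilter_filtermap_diff:
  assumes "free_ultrafilter q"
  shows "free_ultrafilter (filtermap (\<lambda>n. n - k) q)"
  unfolding free_ultrafilter_def
proof (intro conjI allI)
  show "filtermap (\<lambda>n. n - k) q \<noteq> bot"
    using assms by (simp add: free_ultrafilter_def filtermap_bot_iff)
  show "eventually P (filtermap (\<lambda>n. n - k) q) \<or> eventually (\<lambda>n. \<not> P n) (filtermap (\<lambda>n. n - k) q)" for P
    using assms by (simp add: free_ultrafilter_def eventually_filtermap)
  show "eventually (\<lambda>n. n \<noteq> m) (filtermap (\<lambda>n. n - k) q)" for m
  proof -
    have "eventually (\<lambda>n. n \<noteq> m + k) q" using assms by (simp add: free_ultrafilter_def)
    with free_ultrafilter_eventually_ge[OF assms, of k] have "eventually (\<lambda>n. n - k \<noteq> m) q"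
      by (rule eventually_elim2) auto
    then show ?thesis by (simp add: eventually_filtermap)
  qed
qed

lemma free_ultrafilter_filtermap_add_diff:
  assumes "free_ultrafilter q"
  shows "filtermap (\<lambda>i. k + i) (filtermap (\<lambda>n. n - k) q) = q"
proof (rule filter_eq_iff[THEN iffD2], intro allI)
  fix P
  have "eventually (\<lambda>n. P (k + (n - k)) \<longleftrightarrow> P n) q"
    using free_ultrafilter_eventually_ge[OF assms, of k] by (rule eventually_mono) auto
  then show "eventually P (filtermap (\<lambda>i. k + i) (filtermap (\<lambda>n. n - k) q)) = eventually P q"
    by (simp add: eventually_filtermap) (rule eventually_subst)
qed

lemma Lim_filtermap: "Lim (filtermap g F) h = Lim F (\<lambda>i. h (g i))"
  unfolding t2_space_class.Lim_def by (simp add: filterlim_filtermap)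

lemma continuous_map_pointwise_precompose:
  assumes "h ` X \<subseteq> X"
  shows "continuous_map (pointwise_top X) (pointwise_top X) (\<lambda>\<phi>. restrict (\<phi> \<circ> h) X)"
  unfolding pointwise_top_def continuous_map_componentwise
proof (intro conjI ballI)
  show "(\<lambda>\<phi>. restrict (\<phi> \<circ> h) X) ` topspace (product_topology (\<lambda>_. top_of_set X) X)
          \<subseteq> extensional X"
    by auto
  fix x assume "x \<in> X"
  then have "continuous_map (product_topology (\<lambda>_. top_of_set X) X) (top_of_set X) (\<lambda>\<phi>. \<phi> (h x))"
    using assms continuous_map_product_projection[of "h x" X "\<lambda>_. top_of_set X"] by auto
  then show "continuous_map (product_topology (\<lambda>_. top_of_set X) X) (top_of_set X)
               (\<lambda>\<phi>. restrict (\<phi> \<circ> h) X x)"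
    using \<open>x \<in> X\<close> by simp
qed

lemma precompose_iterk_limit:
  assumes "k \<ge> 1" "iter1 f (k - 1) ` X \<subseteq> X"
  shows "restrict (restrict (\<lambda>y. Lim p (\<lambda>i. iterk f k i y)) X \<circ> iter1 f (k - 1)) X
       = restrict (\<lambda>x. Lim (filtermap (\<lambda>i. k + i) p) (\<lambda>n. iter1 f n x)) X"
proof
  fix x
  show "restrict (restrict (\<lambda>y. Lim p (\<lambda>i. iterk f k i y)) X \<circ> iter1 f (k - 1)) X x
      = restrict (\<lambda>x. Lim (filtermap (\<lambda>i. k + i) p) (\<lambda>n. iter1 f n x)) X x"
    using assms by (auto simp: Lim_filtermap iter1_add_eq_iterk)
qed

lemma Ek_star_precompose_eq_E1_star:
  assumes "k \<ge> 1" "iter1 f (k - 1) ` X \<subseteq> X"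
  shows "(\<lambda>\<phi>. restrict (\<phi> \<circ> iter1 f (k - 1)) X) ` Ek_star X f k = E1_star X f"
proof
  show "(\<lambda>\<phi>. restrict (\<phi> \<circ> iter1 f (k - 1)) X) ` Ek_star X f k \<subseteq> E1_star X f"
    unfolding Ek_star_def E1_star_def
    using precompose_iterk_limit[OF assms] free_ultrafilter_filtermap_add by blast
  show "E1_star X f \<subseteq> (\<lambda>\<phi>. restrict (\<phi> \<circ> iter1 f (k - 1)) X) ` Ek_star X f k"
  proof
    fix \<psi> assume "\<psi> \<in> E1_star X f"
    then obtain q where q: "free_ultrafilter q"
      and \<psi>: "\<psi> = restrict (\<lambda>x. Lim q (\<lambda>n. iter1 f n x)) X"
      unfolding E1_star_def by blast
    define p where "p = filtermap (\<lambda>n. n - k) q"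
    have "\<psi> = restrict (restrict (\<lambda>y. Lim p (\<lambda>i. iterk f k i y)) X \<circ> iter1 f (k - 1)) X"
      using precompose_iterk_limit[OF assms, of p] free_ultrafilter_filtermap_add_diff[OF q] \<psi>
      by (simp add: p_def)
    moreover have "restrict (\<lambda>y. Lim p (\<lambda>i. iterk f k i y)) X \<in> Ek_star X f k"
      unfolding Ek_star_def p_def using free_ultrafilter_filtermap_diff[OF q] by blast
    ultimately show "\<psi> \<in> (\<lambda>\<phi>. restrict (\<phi> \<circ> iter1 f (k - 1)) X) ` Ek_star X f k" by blast
  qed
qed

theorem theorem2p6:
  fixes X :: "'a::metric_space set" and f :: "nat \<Rightarrow> 'a \<Rightarrow> 'a" and k :: nat
  assumes "compact X"
    and "\<And>n. n \<ge> 1 \<Longrightarrow> continuous_on X (f n)"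
    and "\<And>n. n \<ge> 1 \<Longrightarrow> f n ` X \<subseteq> X"
    and "k \<ge> 2"
  shows "\<exists>g. continuous_map (subtopology (pointwise_top X) (Ek_star X f k))
                             (subtopology (pointwise_top X) (E1_star X f)) g
             \<and> g ` (Ek_star X f k) = E1_star X f"
proof -
  define g where "g = (\<lambda>\<phi>::'a \<Rightarrow> 'a. restrict (\<phi> \<circ> iter1 f (k - 1)) X)"
  have maps: "iter1 f (k - 1) ` X \<subseteq> X"
    unfolding iter1_def using comp_block_in[OF assms(3), where a = 1] by auto
  have onto: "g ` Ek_star X f k = E1_star X f"
    unfolding g_def using Ek_star_precompose_eq_E1_star[OF _ maps] assms(4) by simp
  have "continuous_map (subtopology (pointwise_top X) (Ek_star X f k)) (pointwise_top X) g"
    unfolding g_def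
    by (rule continuous_map_from_subtopology[OF continuous_map_pointwise_precompose[OF maps]])
  with onto show ?thesis
    by (auto simp: continuous_map_in_subtopology)
qed

end
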